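(* For every integer $n \ge 0$, define $\psi : \mathrm{SYT}(\theta^{(n)}) \to \mathcal{P}_n$ as follows. For $T \in \mathrm{SYT}(\theta^{(n)})$, let $\psi(T) = p_1 p_2 \cdots p_{2n+2}$, where for each $1 \le i \le 2n+2$: \[ p_i = \begin{cases} \mathsf{E}, & \text{if } i+2 \in \mathrm{arm}(T);\\ \mathsf{N}, & \text{if } i+2 \in \mathrm{leg}(T);\\ \mathsf{S}, & \text{if } i+2 \in \mathrm{heart}(T) \text{ and } 2 \in \mathrm{arm}(T);\\ \mathsf{W}, & \text{if } i+2 \in \mathrm{heart}(T) \text{ and } 2 \in \mathrm{leg}(T). \end{cases} \] Then $\psi(T)$ lies in $\mathcal{P}_n$ for every $T$, and $\psi$ is a bijection. In particular, $|\mathcal{P}_n| = |\mathrm{SYT}(\theta^{(n)})|$.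
   Context: For $n \ge 0$, $\theta^{(n)}$ denotes the integer partition $(n+2, 2, 1^n)$ of $2n+4$ (rows of lengths $n+2$, $2$, and then $n$ rows of length $1$), identified with its Young diagram in English convention (the row of length $n+2$ on top). The \emph{arm} of $\theta^{(n)}$ is its first row (all $n+2$ boxes, including the top-left corner box), the \emph{leg} is its first column (all $n+2$ boxes, including the top-left corner box), and the \emph{heart} is the unique box lying in neither the first row nor the first column (the second box of the second row). $\mathrm{SYT}(\theta^{(n)})$ is the set of standard Young tableaux of shape $\theta^{(n)}$: bijective fillings of the boxes with $1, \dots, 2n+4$ increasing left to right along rows and top to bottom down columns. For a tableau $T$, $\mathrm{arm}(T)$, $\mathrm{leg}(T)$, $\mathrm{heart}(T)$ denote the sets of entries of $T$ in the arm, leg, and heart respectively; "$k \in \mathrm{arm}(T)$" means the entry $k$ lies in the arm. $\mathcal{P}_n$ is the set of lattice paths in $\mathbb{Z}^2$ from $(0,0)$ to $(n,n)$ of exactly $2n+2$ steps, each step one of $\mathsf{N} = (0,1)$, $\mathsf{S} = (0,-1)$, $\mathsf{E} = (1,0)$, $\mathsf{W} = (-1,0)$, such that every vertex of the path lies in the closed first quadrant $\{(x,y) : x \ge 0, y \ge 0\}$. Such a path is identified with its word $p_1 p_2 \cdots p_{2n+2}$ of steps in the alphabet $\{\mathsf{N},\mathsf{S},\mathsf{E},\mathsf{W}\}$. *)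

theory Defs
  imports Main
begin

(* Partitions as lists of row lengths (weakly decreasing); cells (row, column), 0-indexed,
   English convention: row 0 is the top row. *)
definition young_diagram :: "nat list \<Rightarrow> (nat \<times> nat) set" where
  "young_diagram la = {(i, j). i < length la \<and> j < la ! i}"

(* Standard Young tableaux: bijective fillings with 1..|la|, increasing along rows and
   down columns; extended by 0 outside the diagram so that tableaux are unique functions. *)
definition SYT :: "nat list \<Rightarrow> ((nat \<times> nat) \<Rightarrow> nat) set" where
  "SYT la = {T. bij_betw T (young_diagram la) {1..sum_list la}
              \<and> (\<forall>i j. (i, j) \<in> young_diagram la \<and> (i, Suc j) \<in> young_diagram la
                        \<longrightarrow> T (i, j) < T (i, Suc j))
              \<and> (\<forall>i j. (i, j) \<in> young_diagram la \<and> (Suc i, j) \<in> young_diagram la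
                        \<longrightarrow> T (i, j) < T (Suc i, j))
              \<and> (\<forall>c. c \<notin> young_diagram la \<longrightarrow> T c = 0)}"

definition theta :: "nat \<Rightarrow> nat list" where
  "theta n = [n + 2, 2] @ replicate n 1"

definition arm :: "nat \<Rightarrow> ((nat \<times> nat) \<Rightarrow> nat) \<Rightarrow> nat set" where
  "arm n T = T ` {(0, j) | j. j < n + 2}"

definition leg :: "nat \<Rightarrow> ((nat \<times> nat) \<Rightarrow> nat) \<Rightarrow> nat set" where
  "leg n T = T ` {(i, 0) | i. i < n + 2}"

definition heart :: "((nat \<times> nat) \<Rightarrow> nat) \<Rightarrow> nat set" where
  "heart T = {T (1, 1)}"

datatype step = N | S | E | W

fun step_vec :: "step \<Rightarrow> int \<times> int" where
  "step_vec N = (0, 1)"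
| "step_vec S = (0, -1)"
| "step_vec E = (1, 0)"
| "step_vec W = (-1, 0)"

definition endpoint :: "step list \<Rightarrow> int \<times> int" where
  "endpoint w = (sum_list (map (fst \<circ> step_vec) w), sum_list (map (snd \<circ> step_vec) w))"

definition paths :: "nat \<Rightarrow> step list set" where
  "paths n = {w. length w = 2 * n + 2
               \<and> endpoint w = (int n, int n)
               \<and> (\<forall>k \<le> length w. fst (endpoint (take k w)) \<ge> 0 \<and> snd (endpoint (take k w)) \<ge> 0)}"

definition psi :: "nat \<Rightarrow> ((nat \<times> nat) \<Rightarrow> nat) \<Rightarrow> step list" where
  "psi n T = map (\<lambda>i. if i + 2 \<in> arm n T then E
                      else if i + 2 \<in> leg n T then N
                      else if i + 2 \<in> heart T \<and> 2 \<in> arm n T then S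
                      else W) [1..<2 * n + 3]"

end

theory Submission
  imports Defs
begin

text \<open>A tableau of shape \<open>(n+2, 2, 1^n)\<close> is a hook (first row and first column, sharing the
  corner entry 1) plus the heart entry \<open>h\<close>, which only has to exceed the second entry of the arm
  and of the leg. Entry 2 lies in exactly one of arm and leg; it decides whether \<open>h\<close> is read as a
  step \<open>S\<close> or \<open>W\<close>, and the remaining entries \<open>3..2n+4\<close> become the steps \<open>E\<close> (arm) and \<open>N\<close> (leg).
  The two counting conditions of a path to \<open>(n, n)\<close> say that arm and leg both have \<open>n + 2\<close>
  entries, and the quadrant condition can only fail at the unique \<open>S\<close> or \<open>W\<close> step: it says that
  an \<open>N\<close> (resp. \<open>E\<close>) step comes before it, i.e. that \<open>h\<close> exceeds the second entry of the leg
  (resp. arm). The inverse map reads arm, leg and heart off a path in the same way.\<close>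

lemma endpoint_eq_count_list:
  "endpoint w = (int (count_list w E) - int (count_list w W),
                 int (count_list w N) - int (count_list w S))"
proof (induction w)
  case (Cons a w) then show ?case by (cases a) (auto simp: endpoint_def)
qed (simp add: endpoint_def)

lemma length_eq_sum_count_list:
  "length w = count_list w N + count_list w S + count_list w E + count_list w W"
proof (induction w)
  case (Cons a w) then show ?case by (cases a) auto
qed simp

definition positions :: "'a list \<Rightarrow> 'a \<Rightarrow> nat set" where
  "positions xs x = {i. i < length xs \<and> xs ! i = x}"

lemma finite_positions [simp]: "finite (positions xs x)"
  unfolding positions_def by auto

lemma count_list_eq_card_positions: "count_list xs x = card (positions xs x)"
  by (simp add: positions_def count_list_eq_length_filter length_filter_conv_card eq_commute)

lemma count_list_take_le_if_preceded:
  assumes "count_list xs b \<le> 1" and preceded: "\<forall>j<length xs. xs ! j = b \<longrightarrow> (\<exists>i<j. xs ! i = a)"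
  shows "count_list (take k xs) b \<le> count_list (take k xs) a"
proof (cases "b \<in> set (take k xs)")
  case True
  then obtain j where j: "j < k" "j < length xs" "xs ! j = b" by (auto simp: in_set_conv_nth)
  then obtain i where "i < j" "xs ! i = a" using preceded by blast
  with j have "a \<in> set (take k xs)" by (auto simp: in_set_conv_nth intro!: exI[of _ i])
  then have "count_list (take k xs) a \<noteq> 0" by (simp add: count_list_0_iff)
  moreover have "count_list (take k xs) b \<le> count_list xs b"
    using count_list_append[of "take k xs" "drop k xs" b] by simp
  ultimately show ?thesis using assms(1) by linarith
qed (simp add: count_list_0_iff)

lemma earlier_occurrence_if_prefix_count_le:
  assumes "count_list (take (Suc j) w) b \<le> count_list (take (Suc j) w) a"
    and "j < length w" "w ! j = b" "a \<noteq> b"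
  shows "\<exists>i<j. w ! i = a"
proof -
  have "b \<in> set (take (Suc j) w)" using assms(2,3) by (auto simp: in_set_conv_nth intro!: exI[of _ j])
  then have "a \<in> set (take (Suc j) w)" using assms(1) by (metis count_list_0_iff le_zero_eq)
  then obtain i where "i < Suc j" "w ! i = a" by (auto simp: in_set_conv_nth)
  with assms(3,4) show ?thesis by (metis less_Suc_eq)
qed

lemma sorted_list_of_set_nth_less:
  "finite X \<Longrightarrow> i < j \<Longrightarrow> j < card X \<Longrightarrow> sorted_list_of_set X ! i < sorted_list_of_set X ! j"
  using sorted_wrt_nth_less[OF sorted_list_of_set.strict_sorted_key_list_of_set] by simp

lemma in_set_sorted_list_of_setE:
  assumes "finite X" "x \<in> X"
  obtains j where "j < card X" "sorted_list_of_set X ! j = x"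
  using assms by (metis in_set_conv_nth length_sorted_list_of_set set_sorted_list_of_set)

lemma sorted_list_of_set_nth_0_eq_least:
  assumes "finite X" "x \<in> X" "\<forall>y\<in>X. x \<le> y"
  shows "sorted_list_of_set X ! 0 = x"
proof -
  have "Min X = x" using assms by (intro Min_eqI) auto
  moreover have "X \<noteq> {}" using assms by auto
  ultimately show ?thesis using assms sorted_list_of_set_nonempty[of X] by simp
qed

lemma sorted_list_of_set_nth_1_le:
  assumes "finite X" "x \<in> X" "x \<noteq> sorted_list_of_set X ! 0"
  shows "sorted_list_of_set X ! 1 \<le> x"
proof -
  obtain p where p: "p < card X" "sorted_list_of_set X ! p = x"
    using assms in_set_sorted_list_of_setE by metis
  with assms have "p \<noteq> 0" by (metis bot_nat_0.not_eq_extremum)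
  then show ?thesis using sorted_list_of_set_nth_less[OF assms(1), of 1 p] p by (cases "p = 1") auto
qed

lemma sorted_list_of_set_image_strict_mono:
  assumes "\<And>i j. i < j \<Longrightarrow> j < m \<Longrightarrow> f i < f j"
  shows "sorted_list_of_set (f ` {..<m}) = map f [0..<m]"
proof -
  have "sorted_wrt (<) (map f [0..<m])"
    unfolding sorted_wrt_iff_nth_less using assms by simp
  then have "sorted_list_of_set (set (map f [0..<m])) = map f [0..<m]"
    by (simp add: strict_sorted_iff sorted_list_of_set.idem_if_sorted_distinct del: set_map set_upt)
  moreover have "set (map f [0..<m]) = f ` {..<m}" by (auto simp: atLeast0LessThan)
  ultimately show ?thesis by metis
qed

subsection \<open>The shape \<open>\<theta>\<^sup>(\<^sup>n\<^sup>)\<close>\<close>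

lemma young_diagram_theta_iff:
  "(i, j) \<in> young_diagram (theta n) \<longleftrightarrow> (i = 0 \<and> j < n + 2) \<or> (j = 0 \<and> i < n + 2) \<or> (i = 1 \<and> j = 1)"
proof (cases i)
  case (Suc k) then show ?thesis by (cases k) (auto simp: young_diagram_def theta_def nth_append)
qed (auto simp: young_diagram_def theta_def)

lemma young_diagram_theta:
  "young_diagram (theta n) = insert (1, 1) ((\<lambda>j. (0, j)) ` {..<n + 2} \<union> (\<lambda>i. (Suc i, 0)) ` {..<n + 1})"
proof (rule set_eqI)
  fix c :: "nat \<times> nat"
  obtain i j where c: "c = (i, j)" by force
  show "c \<in> young_diagram (theta n) \<longleftrightarrow> c \<in> insert (1, 1) ((\<lambda>j. (0, j)) ` {..<n + 2} \<union> (\<lambda>i. (Suc i, 0)) ` {..<n + 1})"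
    unfolding c young_diagram_theta_iff by (cases i) auto
qed

lemma finite_young_diagram_theta: "finite (young_diagram (theta n))"
  unfolding young_diagram_theta by simp

lemma card_young_diagram_theta: "card (young_diagram (theta n)) = 2 * n + 4"
proof -
  have "card ((\<lambda>j. (0::nat, j)) ` {..<n + 2} \<union> (\<lambda>i. (Suc i, 0::nat)) ` {..<n + 1}) = (n + 2) + (n + 1)"
    by (subst card_Un_disjoint) (auto simp: card_image inj_on_def)
  then show ?thesis unfolding young_diagram_theta by (subst card_insert_disjoint) auto
qed

lemma image_young_diagram_theta:
  "T ` young_diagram (theta n) = arm n T \<union> leg n T \<union> heart T"
proof -
  have "young_diagram (theta n) = {(0, j) | j. j < n + 2} \<union> {(i, 0) | i. i < n + 2} \<union> {(1, 1)}"
    using young_diagram_theta_iff by auto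
  then show ?thesis by (auto simp: arm_def leg_def heart_def)
qed

lemma sum_list_theta: "sum_list (theta n) = 2 * n + 4"
  by (simp add: theta_def sum_list_replicate)

subsection \<open>Reading a tableau off a path\<close>

text \<open>Entry \<open>k \<ge> 3\<close> of the tableau corresponds to step \<open>k - 3\<close> of the path (0-indexed);
  entry 1 is the corner and entry 2 goes to the arm iff the path has an \<open>S\<close> step.\<close>

definition arm_of_path :: "step list \<Rightarrow> nat set" where
  "arm_of_path w = {1} \<union> (if S \<in> set w then {2} else {}) \<union> (\<lambda>i. i + 3) ` positions w E"

definition leg_of_path :: "step list \<Rightarrow> nat set" where
  "leg_of_path w = {1} \<union> (if W \<in> set w then {2} else {}) \<union> (\<lambda>i. i + 3) ` positions w N"

definition turn_position :: "step list \<Rightarrow> nat" where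
  "turn_position w = (LEAST i. i < length w \<and> (w ! i = S \<or> w ! i = W))"

definition heart_of_path :: "step list \<Rightarrow> nat" where
  "heart_of_path w = turn_position w + 3"

definition tableau_of_path :: "nat \<Rightarrow> step list \<Rightarrow> nat \<times> nat \<Rightarrow> nat" where
  "tableau_of_path n w = (\<lambda>(i, j).
     if (i, j) = (1, 1) then heart_of_path w
     else if i = 0 \<and> j < n + 2 then sorted_list_of_set (arm_of_path w) ! j
     else if j = 0 \<and> i < n + 2 then sorted_list_of_set (leg_of_path w) ! i
     else 0)"

lemma finite_arm_of_path [simp]: "finite (arm_of_path w)"
  and finite_leg_of_path [simp]: "finite (leg_of_path w)"
  by (auto simp: arm_of_path_def leg_of_path_def)

lemma shifted_positions_iff:
  "k \<in> (\<lambda>i. i + 3) ` positions w c \<longleftrightarrow> 3 \<le> k \<and> k - 3 < length w \<and> w ! (k - 3) = c"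
  by (auto simp: positions_def image_iff intro!: exI[of _ "k - 3"])

lemma mem_arm_of_path:
  "k \<in> arm_of_path w \<longleftrightarrow> k = 1 \<or> (k = 2 \<and> S \<in> set w) \<or> (3 \<le> k \<and> k - 3 < length w \<and> w ! (k - 3) = E)"
  by (auto simp: arm_of_path_def shifted_positions_iff)

lemma mem_leg_of_path:
  "k \<in> leg_of_path w \<longleftrightarrow> k = 1 \<or> (k = 2 \<and> W \<in> set w) \<or> (3 \<le> k \<and> k - 3 < length w \<and> w ! (k - 3) = N)"
  by (auto simp: leg_of_path_def shifted_positions_iff)

lemma sorted_list_of_set_arm_of_path_0: "sorted_list_of_set (arm_of_path w) ! 0 = 1"
  by (rule sorted_list_of_set_nth_0_eq_least) (auto simp: mem_arm_of_path)

lemma sorted_list_of_set_leg_of_path_0: "sorted_list_of_set (leg_of_path w) ! 0 = 1"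
  by (rule sorted_list_of_set_nth_0_eq_least) (auto simp: mem_leg_of_path)

lemma tableau_of_path_row: "j < n + 2 \<Longrightarrow> tableau_of_path n w (0, j) = sorted_list_of_set (arm_of_path w) ! j"
  by (simp add: tableau_of_path_def)

lemma tableau_of_path_column: "i < n + 2 \<Longrightarrow> tableau_of_path n w (i, 0) = sorted_list_of_set (leg_of_path w) ! i"
  by (cases i) (simp_all add: tableau_of_path_def sorted_list_of_set_arm_of_path_0 sorted_list_of_set_leg_of_path_0)

lemma tableau_of_path_heart: "tableau_of_path n w (1, 1) = heart_of_path w"
  by (simp add: tableau_of_path_def)

lemma heart_tableau_of_path: "heart (tableau_of_path n w) = {heart_of_path w}"
  unfolding heart_def tableau_of_path_heart ..

lemma tableau_of_path_outside: "c \<notin> young_diagram (theta n) \<Longrightarrow> tableau_of_path n w c = 0"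
  by (cases c) (auto simp: tableau_of_path_def young_diagram_theta_iff)

lemma card_insert_1_shifted:
  assumes "X \<subseteq> {2::nat}"
  shows "card ({1} \<union> X \<union> (\<lambda>i. i + 3) ` positions w c) = 1 + card X + count_list w c"
proof -
  have "finite X" using assms finite_subset by blast
  moreover have "card ((\<lambda>i. i + 3) ` positions w c) = count_list w c"
    by (simp add: card_image inj_on_def count_list_eq_card_positions)
  ultimately show ?thesis using assms
    by (subst card_Un_disjoint) (auto simp: card_insert_if)
qed

lemma card_arm_of_path: "card (arm_of_path w) = 1 + (if S \<in> set w then 1 else 0) + count_list w E"
  unfolding arm_of_path_def by (subst card_insert_1_shifted) auto

lemma card_leg_of_path: "card (leg_of_path w) = 1 + (if W \<in> set w then 1 else 0) + count_list w N"
  unfolding leg_of_path_def by (subst card_insert_1_shifted) auto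

subsection \<open>Tableaux of shape \<open>\<theta>\<^sup>(\<^sup>n\<^sup>)\<close>\<close>

lemma psi_nth:
  "i < 2 * n + 2 \<Longrightarrow> psi n T ! i = (if i + 3 \<in> arm n T then E
                                     else if i + 3 \<in> leg n T then N
                                     else if i + 3 \<in> heart T \<and> 2 \<in> arm n T then S
                                     else W)"
  by (simp add: psi_def nth_map_upt) (simp add: numeral_eq_Suc)

lemma length_psi: "length (psi n T) = 2 * n + 2"
  by (simp add: psi_def)

context
  fixes n :: nat and T :: "nat \<times> nat \<Rightarrow> nat"
  assumes T: "T \<in> SYT (theta n)"
begin

lemma SYT_bij: "bij_betw T (young_diagram (theta n)) {1..2 * n + 4}"
  using T by (simp add: SYT_def sum_list_theta)

lemma SYT_range: "c \<in> young_diagram (theta n) \<Longrightarrow> T c \<in> {1..2 * n + 4}"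
  using SYT_bij bij_betwE by blast

lemma SYT_eq_iff: "c \<in> young_diagram (theta n) \<Longrightarrow> d \<in> young_diagram (theta n) \<Longrightarrow> T c = T d \<longleftrightarrow> c = d"
  using SYT_bij bij_betw_def inj_on_eq_iff by metis

lemma SYT_zero_outside: "c \<notin> young_diagram (theta n) \<Longrightarrow> T c = 0"
  using T by (cases c) (simp add: SYT_def)

lemma SYT_heart_gt: "T (1, 0) < T (1, 1)" "T (0, 1) < T (1, 1)"
  using T unfolding SYT_def by (auto simp: young_diagram_theta_iff)

lemma SYT_arm_strict_mono: "j < j' \<Longrightarrow> j' < n + 2 \<Longrightarrow> T (0, j) < T (0, j')"
proof (induction j')
  case (Suc j')
  have "T (0, j') < T (0, Suc j')"
    using T Suc.prems by (auto simp: SYT_def young_diagram_theta_iff)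
  with Suc show ?case by (cases "j = j'") auto
qed simp

lemma SYT_leg_strict_mono: "i < i' \<Longrightarrow> i' < n + 2 \<Longrightarrow> T (i, 0) < T (i', 0)"
proof (induction i')
  case (Suc i')
  have "T (i', 0) < T (Suc i', 0)"
    using T Suc.prems by (auto simp: SYT_def young_diagram_theta_iff)
  with Suc show ?case by (cases "i = i'") auto
qed simp

lemma SYT_corner: "T (0, 0) = 1"
proof -
  have le: "T (0, 0) \<le> T c" if "c \<in> young_diagram (theta n)" for c
  proof -
    obtain i j where c: "c = (i, j)" by force
    with that consider "i = 0" "j < n + 2" | "j = 0" "i < n + 2" | "i = 1" "j = 1"
      by (auto simp: young_diagram_theta_iff)
    then show ?thesis
    proof cases
      case 1 then show ?thesis using SYT_arm_strict_mono[of 0 j] c by (cases j) auto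
    next
      case 2 then show ?thesis using SYT_leg_strict_mono[of 0 i] c by (cases i) auto
    next
      case 3 then show ?thesis using SYT_leg_strict_mono[of 0 1] SYT_heart_gt c by auto
    qed
  qed
  have "1 \<in> T ` young_diagram (theta n)" using SYT_bij by (simp add: bij_betw_def)
  then obtain c where "c \<in> young_diagram (theta n)" "T c = 1" by (metis imageE)
  then have "T (0, 0) \<le> 1" using le by fastforce
  moreover have "T (0, 0) \<ge> 1" using SYT_range[of "(0, 0)"] by (simp add: young_diagram_theta_iff)
  ultimately show ?thesis by simp
qed

lemma mem_arm: "k \<in> arm n T \<longleftrightarrow> (\<exists>j<n + 2. T (0, j) = k)"
  by (auto simp: arm_def)

lemma mem_leg: "k \<in> leg n T \<longleftrightarrow> (\<exists>i<n + 2. T (i, 0) = k)"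
  by (auto simp: leg_def)

lemma arm_leg_eq_1:
  assumes "k \<in> arm n T" "k \<in> leg n T"
  shows "k = 1"
proof -
  obtain i j where "j < n + 2" "T (0, j) = k" "i < n + 2" "T (i, 0) = k"
    using assms unfolding mem_arm mem_leg by auto
  then have "(0, j) = (i, 0)" using SYT_eq_iff by (metis young_diagram_theta_iff)
  then show ?thesis using \<open>T (0, j) = k\<close> SYT_corner by auto
qed

lemma heart_notin_arm: "T (1, 1) \<notin> arm n T"
proof
  assume "T (1, 1) \<in> arm n T"
  then obtain j where "j < n + 2" "T (0, j) = T (1, 1)" unfolding mem_arm by auto
  then have "(0::nat, j) = (1, 1)" using SYT_eq_iff by (metis young_diagram_theta_iff)
  then show False by simp
qed

lemma heart_notin_leg: "T (1, 1) \<notin> leg n T"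
proof
  assume "T (1, 1) \<in> leg n T"
  then obtain i where "i < n + 2" "T (i, 0) = T (1, 1)" unfolding mem_leg by auto
  then have "(i, 0::nat) = (1, 1)" using SYT_eq_iff by (metis young_diagram_theta_iff)
  then show False by simp
qed

lemma arm_leg_heart_cover:
  assumes "1 \<le> k" "k \<le> 2 * n + 4"
  shows "k \<in> arm n T \<or> k \<in> leg n T \<or> k = T (1, 1)"
proof -
  have "k \<in> T ` young_diagram (theta n)" using SYT_bij assms by (simp add: bij_betw_def)
  then obtain c where "c \<in> young_diagram (theta n)" "T c = k" by (metis imageE)
  then show ?thesis unfolding mem_arm mem_leg by (cases c) (auto simp: young_diagram_theta_iff)
qed

lemma arm_bounds: "k \<in> arm n T \<Longrightarrow> 1 \<le> k \<and> k \<le> 2 * n + 4"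
  unfolding mem_arm using SYT_range by (fastforce simp: young_diagram_theta_iff)

lemma leg_bounds: "k \<in> leg n T \<Longrightarrow> 1 \<le> k \<and> k \<le> 2 * n + 4"
  unfolding mem_leg using SYT_range by (fastforce simp: young_diagram_theta_iff)

lemma heart_bounds: "3 \<le> T (1, 1)" "T (1, 1) \<le> 2 * n + 4"
  using SYT_corner SYT_leg_strict_mono[of 0 1] SYT_heart_gt SYT_range[of "(1, 1)"]
  by (auto simp: young_diagram_theta_iff)

lemma two_in_arm_or_leg: "2 \<in> arm n T \<or> 2 \<in> leg n T"
  using arm_leg_heart_cover[of 2] heart_bounds by auto

lemma sorted_list_of_set_arm: "sorted_list_of_set (arm n T) = map (\<lambda>j. T (0, j)) [0..<n + 2]"
proof -
  have "arm n T = (\<lambda>j. T (0, j)) ` {..<n + 2}" by (auto simp: arm_def)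
  then show ?thesis using sorted_list_of_set_image_strict_mono[OF SYT_arm_strict_mono] by simp
qed

lemma sorted_list_of_set_leg: "sorted_list_of_set (leg n T) = map (\<lambda>i. T (i, 0)) [0..<n + 2]"
proof -
  have "leg n T = (\<lambda>i. T (i, 0)) ` {..<n + 2}" by (auto simp: leg_def)
  then show ?thesis using sorted_list_of_set_image_strict_mono[OF SYT_leg_strict_mono] by simp
qed

lemma card_arm: "card (arm n T) = n + 2"
  using length_sorted_list_of_set[of "arm n T"] by (simp add: sorted_list_of_set_arm)

lemma card_leg: "card (leg n T) = n + 2"
  using length_sorted_list_of_set[of "leg n T"] by (simp add: sorted_list_of_set_leg)

lemma psi_nth_eq_E: "i < 2 * n + 2 \<Longrightarrow> psi n T ! i = E \<longleftrightarrow> i + 3 \<in> arm n T"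
  by (simp add: psi_nth)

lemma psi_nth_eq_N: "i < 2 * n + 2 \<Longrightarrow> psi n T ! i = N \<longleftrightarrow> i + 3 \<in> leg n T"
  using arm_leg_eq_1[of "i + 3"] by (auto simp: psi_nth)

lemma psi_nth_eq_S: "i < 2 * n + 2 \<Longrightarrow> psi n T ! i = S \<longleftrightarrow> i + 3 = T (1, 1) \<and> 2 \<in> arm n T"
  using arm_leg_heart_cover[of "i + 3"] heart_notin_arm heart_notin_leg
  by (auto simp: psi_nth heart_def)

lemma psi_nth_eq_W: "i < 2 * n + 2 \<Longrightarrow> psi n T ! i = W \<longleftrightarrow> i + 3 = T (1, 1) \<and> 2 \<notin> arm n T"
  using arm_leg_heart_cover[of "i + 3"] heart_notin_arm heart_notin_leg
  by (auto simp: psi_nth heart_def)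

lemma psi_nth_heart: "psi n T ! (T (1, 1) - 3) = (if 2 \<in> arm n T then S else W)"
  using psi_nth_eq_S[of "T (1, 1) - 3"] psi_nth_eq_W[of "T (1, 1) - 3"] heart_bounds by auto

lemma S_in_psi_iff: "S \<in> set (psi n T) \<longleftrightarrow> 2 \<in> arm n T"
  using psi_nth_eq_S psi_nth_heart heart_bounds
  by (auto simp: in_set_conv_nth length_psi intro!: exI[of _ "T (1, 1) - 3"])

lemma W_in_psi_iff: "W \<in> set (psi n T) \<longleftrightarrow> 2 \<notin> arm n T"
  using psi_nth_eq_W psi_nth_heart heart_bounds
  by (auto simp: in_set_conv_nth length_psi intro!: exI[of _ "T (1, 1) - 3"])

lemma arm_of_path_psi: "arm_of_path (psi n T) = arm n T"
proof (rule set_eqI)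
  fix k :: nat
  consider "k = 0" | "k = 1" | "k = 2" | "3 \<le> k" by linarith
  then show "k \<in> arm_of_path (psi n T) \<longleftrightarrow> k \<in> arm n T"
  proof cases
    case 1 then show ?thesis using arm_bounds[of 0] by (auto simp: mem_arm_of_path)
  next
    case 2 then show ?thesis using SYT_corner by (auto simp: mem_arm_of_path mem_arm)
  next
    case 3 then show ?thesis using S_in_psi_iff by (auto simp: mem_arm_of_path)
  next
    case 4 then show ?thesis
      using psi_nth_eq_E[of "k - 3"] arm_bounds[of k] by (auto simp: mem_arm_of_path length_psi)
  qed
qed

lemma leg_of_path_psi: "leg_of_path (psi n T) = leg n T"
proof (rule set_eqI)
  fix k :: nat
  consider "k = 0" | "k = 1" | "k = 2" | "3 \<le> k" by linarith
  then show "k \<in> leg_of_path (psi n T) \<longleftrightarrow> k \<in> leg n T"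
  proof cases
    case 1 then show ?thesis using leg_bounds[of 0] by (auto simp: mem_leg_of_path)
  next
    case 2 then show ?thesis using SYT_corner by (auto simp: mem_leg_of_path mem_leg)
  next
    case 3 then show ?thesis
      using W_in_psi_iff two_in_arm_or_leg arm_leg_eq_1[of 2] by (auto simp: mem_leg_of_path)
  next
    case 4 then show ?thesis
      using psi_nth_eq_N[of "k - 3"] leg_bounds[of k] by (auto simp: mem_leg_of_path length_psi)
  qed
qed

lemma heart_of_path_psi: "heart_of_path (psi n T) = T (1, 1)"
proof -
  have "turn_position (psi n T) = T (1, 1) - 3"
    unfolding turn_position_def
  proof (rule Least_equality)
    show "T (1, 1) - 3 < length (psi n T) \<and> (psi n T ! (T (1, 1) - 3) = S \<or> psi n T ! (T (1, 1) - 3) = W)"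
      using psi_nth_heart heart_bounds by (simp add: length_psi)
  next
    fix i assume "i < length (psi n T) \<and> (psi n T ! i = S \<or> psi n T ! i = W)"
    then show "T (1, 1) - 3 \<le> i" using psi_nth_eq_S[of i] psi_nth_eq_W[of i] by (auto simp: length_psi)
  qed
  then show ?thesis using heart_bounds by (simp add: heart_of_path_def)
qed

lemma tableau_of_path_psi: "tableau_of_path n (psi n T) = T"
proof (rule ext)
  fix c :: "nat \<times> nat"
  obtain i j where c: "c = (i, j)" by force
  show "tableau_of_path n (psi n T) c = T c"
  proof (cases "(i, j) \<in> young_diagram (theta n)")
    case True
    then consider "i = 1" "j = 1" | "i = 0" "j < n + 2" | "j = 0" "0 < i" "i < n + 2"
      by (auto simp: young_diagram_theta_iff)
    then show ?thesis
      by cases (auto simp: c tableau_of_path_def heart_of_path_psi arm_of_path_psi leg_of_path_psi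
          sorted_list_of_set_arm sorted_list_of_set_leg simp del: upt_Suc)
  next
    case False
    then show ?thesis using SYT_zero_outside by (auto simp: c tableau_of_path_def young_diagram_theta_iff)
  qed
qed

lemma psi_N_before_S: "j < length (psi n T) \<Longrightarrow> psi n T ! j = S \<Longrightarrow> \<exists>i<j. psi n T ! i = N"
proof -
  assume j: "j < length (psi n T)" "psi n T ! j = S"
  then have heart: "j + 3 = T (1, 1)" and two: "2 \<in> arm n T" using psi_nth_eq_S by (auto simp: length_psi)
  have leg: "T (1, 0) \<in> leg n T" using mem_leg by fastforce
  moreover have "T (1, 0) \<noteq> 2" using two arm_leg_eq_1 leg by fastforce
  moreover have "T (0, 0) < T (1, 0)" using SYT_leg_strict_mono[of 0 1] by simp
  ultimately have "3 \<le> T (1, 0)" using SYT_corner by linarith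
  moreover have "T (1, 0) < T (1, 1)" using SYT_heart_gt by simp
  ultimately show ?thesis
    using psi_nth_eq_N[of "T (1, 0) - 3"] leg heart j(1) by (intro exI[of _ "T (1, 0) - 3"]) (auto simp: length_psi)
qed

lemma psi_E_before_W: "j < length (psi n T) \<Longrightarrow> psi n T ! j = W \<Longrightarrow> \<exists>i<j. psi n T ! i = E"
proof -
  assume j: "j < length (psi n T)" "psi n T ! j = W"
  then have heart: "j + 3 = T (1, 1)" and two: "2 \<notin> arm n T" using psi_nth_eq_W by (auto simp: length_psi)
  have arm: "T (0, 1) \<in> arm n T" using mem_arm by fastforce
  moreover have "T (0, 1) \<noteq> 2" using two arm by fastforce
  moreover have "T (0, 0) < T (0, 1)" using SYT_arm_strict_mono[of 0 1] by simp
  ultimately have "3 \<le> T (0, 1)" using SYT_corner by linarith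
  moreover have "T (0, 1) < T (1, 1)" using SYT_heart_gt by simp
  ultimately show ?thesis
    using psi_nth_eq_E[of "T (0, 1) - 3"] arm heart j(1) by (intro exI[of _ "T (0, 1) - 3"]) (auto simp: length_psi)
qed

lemma count_list_psi_S: "count_list (psi n T) S = (if 2 \<in> arm n T then 1 else 0)"
proof -
  have "positions (psi n T) S = (if 2 \<in> arm n T then {T (1, 1) - 3} else {})"
    using psi_nth_eq_S heart_bounds by (auto simp: positions_def length_psi)
  then show ?thesis by (simp add: count_list_eq_card_positions)
qed

lemma count_list_psi_W: "count_list (psi n T) W = (if 2 \<in> arm n T then 0 else 1)"
proof -
  have "positions (psi n T) W = (if 2 \<in> arm n T then {} else {T (1, 1) - 3})"
    using psi_nth_eq_W heart_bounds by (auto simp: positions_def length_psi)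
  then show ?thesis by (simp add: count_list_eq_card_positions)
qed

lemma endpoint_psi: "endpoint (psi n T) = (int n, int n)"
proof -
  have "card (arm_of_path (psi n T)) = n + 2" "card (leg_of_path (psi n T)) = n + 2"
    by (simp_all add: arm_of_path_psi leg_of_path_psi card_arm card_leg)
  then show ?thesis
    using count_list_psi_S count_list_psi_W
    by (simp add: endpoint_eq_count_list card_arm_of_path card_leg_of_path S_in_psi_iff W_in_psi_iff
        split: if_splits)
qed

lemma psi_in_paths: "psi n T \<in> paths n"
proof -
  have "count_list (take k (psi n T)) S \<le> count_list (take k (psi n T)) N"
    "count_list (take k (psi n T)) W \<le> count_list (take k (psi n T)) E" for k
    using psi_N_before_S psi_E_before_W count_list_psi_S count_list_psi_W
    by (auto intro!: count_list_take_le_if_preceded)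
  then show ?thesis using endpoint_psi by (simp add: paths_def length_psi endpoint_eq_count_list)
qed

end

subsection \<open>Paths in \<open>\<P>\<^sub>n\<close>\<close>

context
  fixes n :: nat and w :: "step list"
  assumes w: "w \<in> paths n"
begin

lemma length_path: "length w = 2 * n + 2"
  using w by (simp add: paths_def)

lemma path_count_list_cases:
  "(count_list w S = 1 \<and> count_list w W = 0 \<and> count_list w E = n \<and> count_list w N = n + 1)
   \<or> (count_list w S = 0 \<and> count_list w W = 1 \<and> count_list w E = n + 1 \<and> count_list w N = n)"
  using w length_eq_sum_count_list[of w] by (simp add: paths_def endpoint_eq_count_list) linarith

lemma turn_position_unique: "\<exists>!i. i < length w \<and> (w ! i = S \<or> w ! i = W)"
proof -
  have "{i. i < length w \<and> (w ! i = S \<or> w ! i = W)} = positions w S \<union> positions w W"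
    by (auto simp: positions_def)
  also have "card \<dots> = count_list w S + count_list w W"
    unfolding count_list_eq_card_positions by (rule card_Un_disjoint) (auto simp: positions_def)
  also have "\<dots> = 1"
    using path_count_list_cases by auto
  finally obtain t where t: "{i. i < length w \<and> (w ! i = S \<or> w ! i = W)} = {t}"
    by (rule card_1_singletonE)
  have "i < length w \<and> (w ! i = S \<or> w ! i = W) \<longleftrightarrow> i = t" for i
    using t[unfolded set_eq_iff, rule_format, of i] by (simp only: mem_Collect_eq singleton_iff)
  then show ?thesis by (intro ex1I[of _ t]) simp_all
qed

lemma turn_position:
  "turn_position w < length w" "w ! turn_position w = S \<or> w ! turn_position w = W"
  "i < length w \<Longrightarrow> w ! i = S \<or> w ! i = W \<Longrightarrow> i = turn_position w"
proof -
  obtain t where t: "t < length w \<and> (w ! t = S \<or> w ! t = W)"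
    and unique: "\<And>i. i < length w \<and> (w ! i = S \<or> w ! i = W) \<Longrightarrow> i = t"
    using turn_position_unique by blast
  have "turn_position w = t"
    unfolding turn_position_def by (rule Least_equality) (use t unique in fastforce)+
  with t unique show "turn_position w < length w" "w ! turn_position w = S \<or> w ! turn_position w = W"
    "i < length w \<Longrightarrow> w ! i = S \<or> w ! i = W \<Longrightarrow> i = turn_position w"
    by blast+
qed

lemma S_in_path_iff: "S \<in> set w \<longleftrightarrow> w ! turn_position w = S"
  using turn_position by (metis in_set_conv_nth step.distinct(11))

lemma W_in_path_iff: "W \<in> set w \<longleftrightarrow> w ! turn_position w = W"
  using turn_position by (metis in_set_conv_nth step.distinct(11))

lemma card_arm_of_path_eq: "card (arm_of_path w) = n + 2"
  using path_count_list_cases count_list_0_iff[of w S] by (auto simp: card_arm_of_path)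

lemma card_leg_of_path_eq: "card (leg_of_path w) = n + 2"
  using path_count_list_cases count_list_0_iff[of w W] by (auto simp: card_leg_of_path)

lemma heart_of_path_bounds: "3 \<le> heart_of_path w" "heart_of_path w \<le> 2 * n + 4"
  using turn_position(1) length_path by (auto simp: heart_of_path_def)

lemma arm_leg_heart_of_path:
  "arm_of_path w \<union> leg_of_path w \<union> {heart_of_path w} = {1..2 * n + 4}"
proof (intro equalityI subsetI)
  fix k assume "k \<in> arm_of_path w \<union> leg_of_path w \<union> {heart_of_path w}"
  then show "k \<in> {1..2 * n + 4}"
    using heart_of_path_bounds length_path by (auto simp: mem_arm_of_path mem_leg_of_path)
next
  fix k assume k: "k \<in> {1..2 * n + 4}"
  then consider "k = 1" | "k = 2" | "3 \<le> k" by fastforce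
  then show "k \<in> arm_of_path w \<union> leg_of_path w \<union> {heart_of_path w}"
  proof cases
    case 2 then show ?thesis
      using turn_position(2) S_in_path_iff W_in_path_iff by (auto simp: mem_arm_of_path mem_leg_of_path)
  next
    case 3
    then have "k - 3 < length w" using k length_path by auto
    moreover have "w ! (k - 3) \<in> {E, N} \<or> w ! (k - 3) = S \<or> w ! (k - 3) = W" by (cases "w ! (k - 3)") auto
    ultimately show ?thesis
      using 3 turn_position(3)[of "k - 3"] by (auto simp: mem_arm_of_path mem_leg_of_path heart_of_path_def)
  qed (simp add: mem_arm_of_path)
qed

lemma step_before_turn:
  "w ! turn_position w = S \<Longrightarrow> \<exists>i<turn_position w. w ! i = N"
  "w ! turn_position w = W \<Longrightarrow> \<exists>i<turn_position w. w ! i = E"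
proof -
  have "0 \<le> fst (endpoint (take (Suc (turn_position w)) w))" "0 \<le> snd (endpoint (take (Suc (turn_position w)) w))"
    using w turn_position(1) by (auto simp: paths_def)
  then show "w ! turn_position w = S \<Longrightarrow> \<exists>i<turn_position w. w ! i = N"
    "w ! turn_position w = W \<Longrightarrow> \<exists>i<turn_position w. w ! i = E"
    using turn_position(1) by (auto simp: endpoint_eq_count_list intro: earlier_occurrence_if_prefix_count_le)
qed

lemma sorted_list_of_set_leg_of_path_1_less: "sorted_list_of_set (leg_of_path w) ! 1 < heart_of_path w"
proof (cases "w ! turn_position w = S")
  case True
  then obtain i where i: "i < turn_position w" "w ! i = N" using step_before_turn(1) by blast
  then have "i + 3 \<in> leg_of_path w" using turn_position(1) by (simp add: mem_leg_of_path)
  then have "sorted_list_of_set (leg_of_path w) ! 1 \<le> i + 3"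
    by (intro sorted_list_of_set_nth_1_le) (simp_all add: sorted_list_of_set_leg_of_path_0)
  then show ?thesis using i by (simp add: heart_of_path_def)
next
  case False
  then have "2 \<in> leg_of_path w" using turn_position(2) W_in_path_iff by (simp add: mem_leg_of_path)
  then have "sorted_list_of_set (leg_of_path w) ! 1 \<le> 2"
    by (intro sorted_list_of_set_nth_1_le) (simp_all add: sorted_list_of_set_leg_of_path_0)
  then show ?thesis using heart_of_path_bounds by simp
qed

lemma sorted_list_of_set_arm_of_path_1_less: "sorted_list_of_set (arm_of_path w) ! 1 < heart_of_path w"
proof (cases "w ! turn_position w = W")
  case True
  then obtain i where i: "i < turn_position w" "w ! i = E" using step_before_turn(2) by blast
  then have "i + 3 \<in> arm_of_path w" using turn_position(1) by (simp add: mem_arm_of_path)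
  then have "sorted_list_of_set (arm_of_path w) ! 1 \<le> i + 3"
    by (intro sorted_list_of_set_nth_1_le) (simp_all add: sorted_list_of_set_arm_of_path_0)
  then show ?thesis using i by (simp add: heart_of_path_def)
next
  case False
  then have "2 \<in> arm_of_path w" using turn_position(2) S_in_path_iff by (simp add: mem_arm_of_path)
  then have "sorted_list_of_set (arm_of_path w) ! 1 \<le> 2"
    by (intro sorted_list_of_set_nth_1_le) (simp_all add: sorted_list_of_set_arm_of_path_0)
  then show ?thesis using heart_of_path_bounds by simp
qed

lemma arm_tableau_of_path: "arm n (tableau_of_path n w) = arm_of_path w"
proof -
  have "arm n (tableau_of_path n w) = {sorted_list_of_set (arm_of_path w) ! j | j. j < n + 2}"
    by (force simp: arm_def tableau_of_path_row)
  also have "\<dots> = arm_of_path w"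
    using set_conv_nth[of "sorted_list_of_set (arm_of_path w)"] by (simp add: card_arm_of_path_eq)
  finally show ?thesis .
qed

lemma leg_tableau_of_path: "leg n (tableau_of_path n w) = leg_of_path w"
proof -
  have "leg n (tableau_of_path n w) = {sorted_list_of_set (leg_of_path w) ! i | i. i < n + 2}"
    by (force simp: leg_def tableau_of_path_column)
  also have "\<dots> = leg_of_path w"
    using set_conv_nth[of "sorted_list_of_set (leg_of_path w)"] by (simp add: card_leg_of_path_eq)
  finally show ?thesis .
qed

lemma tableau_of_path_in_SYT: "tableau_of_path n w \<in> SYT (theta n)"
proof -
  let ?P = "tableau_of_path n w" and ?D = "young_diagram (theta n)"
  have image: "?P ` ?D = {1..2 * n + 4}"
    unfolding image_young_diagram_theta arm_tableau_of_path leg_tableau_of_path heart_tableau_of_path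
    by (rule arm_leg_heart_of_path)
  then have "inj_on ?P ?D"
    by (intro eq_card_imp_inj_on finite_young_diagram_theta) (simp add: card_young_diagram_theta)
  with image have bij: "bij_betw ?P ?D {1..2 * n + 4}"
    unfolding bij_betw_def by blast
  have row: "?P (i, j) < ?P (i, Suc j)" if "(i, j) \<in> ?D" "(i, Suc j) \<in> ?D" for i j
  proof -
    from that consider "i = 0" "Suc j < n + 2" | "i = 1" "j = 0" by (auto simp: young_diagram_theta_iff)
    then show ?thesis
    proof cases
      case 1 then show ?thesis
        using sorted_list_of_set_nth_less[of "arm_of_path w" j "Suc j"]
        by (simp add: tableau_of_path_row card_arm_of_path_eq)
    next
      case 2 then show ?thesis
        using sorted_list_of_set_leg_of_path_1_less by (simp add: tableau_of_path_column tableau_of_path_heart[simplified])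
    qed
  qed
  have column: "?P (i, j) < ?P (Suc i, j)" if "(i, j) \<in> ?D" "(Suc i, j) \<in> ?D" for i j
  proof -
    from that consider "j = 0" "Suc i < n + 2" | "i = 0" "j = 1" by (auto simp: young_diagram_theta_iff)
    then show ?thesis
    proof cases
      case 1 then show ?thesis
        using sorted_list_of_set_nth_less[of "leg_of_path w" i "Suc i"]
        by (simp add: tableau_of_path_column card_leg_of_path_eq)
    next
      case 2 then show ?thesis
        using sorted_list_of_set_arm_of_path_1_less by (simp add: tableau_of_path_row tableau_of_path_heart[simplified])
    qed
  qed
  show ?thesis
    unfolding SYT_def sum_list_theta mem_Collect_eq
    using bij row column tableau_of_path_outside by (intro conjI allI impI) auto
qed

lemma psi_tableau_of_path: "psi n (tableau_of_path n w) = w"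
proof (rule nth_equalityI)
  show "length (psi n (tableau_of_path n w)) = length w" by (simp add: length_psi length_path)
next
  fix i assume "i < length (psi n (tableau_of_path n w))"
  then have i: "i < 2 * n + 2" by (simp add: length_psi)
  have "psi n (tableau_of_path n w) ! i =
      (if w ! i = E then E else if w ! i = N then N
       else if i + 3 = heart_of_path w \<and> S \<in> set w then S else W)"
    using i length_path
    by (simp add: psi_nth arm_tableau_of_path leg_tableau_of_path heart_tableau_of_path
        mem_arm_of_path mem_leg_of_path)
  moreover have "w ! i = S \<or> w ! i = W \<Longrightarrow> i + 3 = heart_of_path w"
    using turn_position(3) i length_path by (simp add: heart_of_path_def)
  ultimately show "psi n (tableau_of_path n w) ! i = w ! i"
    using S_in_path_iff turn_position(3)[of i] i length_path by (cases "w ! i") auto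
qed

end

theorem theorem3p1:
  fixes n :: nat
  shows "(\<forall>T \<in> SYT (theta n). psi n T \<in> paths n)
       \<and> bij_betw (psi n) (SYT (theta n)) (paths n)
       \<and> card (paths n) = card (SYT (theta n))"
proof -
  have bij: "bij_betw (psi n) (SYT (theta n)) (paths n)"
    by (rule bij_betw_byWitness[where f' = "tableau_of_path n"])
      (auto simp: tableau_of_path_psi psi_tableau_of_path psi_in_paths tableau_of_path_in_SYT)
  moreover have "card (paths n) = card (SYT (theta n))"
    using bij_betw_same_card[OF bij] by simp
  ultimately show ?thesis using psi_in_paths by blast
qed

end
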